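(* Let $N\geq 1$. The following two statements are equivalent. (A) (Matheron's conjecture) For every symmetric $N\times N$ matrix $\gamma$ with zero diagonal, $\pi(\gamma)\in\mathrm{cone}(0;\mathscr{V}_N^* )$ if and only if $\sum_{i,j=1}^N\gamma_{i,j}e_ie_j\leq 0$ for every $e\in\mathbb{Z}^N$ with $\sum_{i=1}^Ne_i=1$. (B) A symmetric $N\times N$ matrix $\rho$ with $\rho_{i,i}=1$ for all $i$ is a unit covariance if and only if $\sum_{i,j=1}^N\rho_{i,j}e_ie_j\geq 1$ for every $e\in\mathsf{E}_N$, where $\mathsf{E}_N=\{e\in\mathbb{Z}^N:\ \sum_i u_ie_i=1\text{ for some }u\in\{-1,1\}^N\}$.
   Context: A unit field on $[N]=\{1,\dots,N\}$ is a random vector $X\in\{-1,1\}^N$ with unit covariance $\rho^X_{i,j}=\mathbf{E}[X_iX_j]$; a matrix is a unit covariance if it is of this form. For a random subset $Y\subseteq[N]$, its covariogram is $\gamma^Y_{i,j}=\frac12\mathbb{P}(1_Y(i)\neq 1_Y(j))$; $\mathscr{V}_N$ is the set of all such covariograms. $\pi$ maps a symmetric matrix to its supra-diagonal array $(\gamma_{i,j})_{1\le i<j\le N}$, and $\mathscr{V}_N^*=\pi(\mathscr{V}_N)$. For a convex set $C$ and a point $x$, $\mathrm{cone}(x;C)$ is the smallest convex cone with apex $x$ containing $C$, i.e. $\{x+t(c-x): t\geq 0, c\in C\}$. *)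

theory Defs
  imports "HOL-Probability.Probability"
begin

text \<open>Indices range over [N] = {1..N}; matrices are functions nat \<Rightarrow> nat \<Rightarrow> real,
  only their values on {1..N} x {1..N} matter. A random vector / random subset is
  represented by its law (a pmf), which is all that covariances/covariograms depend on.\<close>

definition sign_vectors :: "nat \<Rightarrow> (nat \<Rightarrow> int) set" where
  "sign_vectors N = {x. (\<forall>i\<in>{1..N}. x i \<in> {-1, 1}) \<and> (\<forall>i. i \<notin> {1..N} \<longrightarrow> x i = 0)}"

definition unit_field :: "nat \<Rightarrow> (nat \<Rightarrow> int) pmf \<Rightarrow> bool" where
  "unit_field N X \<longleftrightarrow> set_pmf X \<subseteq> sign_vectors N"

definition unit_cov_of :: "(nat \<Rightarrow> int) pmf \<Rightarrow> nat \<Rightarrow> nat \<Rightarrow> real" where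
  "unit_cov_of X i j = measure_pmf.expectation X (\<lambda>x. real_of_int (x i * x j))"

definition unit_covariance :: "nat \<Rightarrow> (nat \<Rightarrow> nat \<Rightarrow> real) \<Rightarrow> bool" where
  "unit_covariance N \<rho> \<longleftrightarrow>
     (\<exists>X. unit_field N X \<and> (\<forall>i\<in>{1..N}. \<forall>j\<in>{1..N}. \<rho> i j = unit_cov_of X i j))"

definition random_subset :: "nat \<Rightarrow> nat set pmf \<Rightarrow> bool" where
  "random_subset N Y \<longleftrightarrow> set_pmf Y \<subseteq> Pow {1..N}"

definition covariogram :: "nat set pmf \<Rightarrow> nat \<Rightarrow> nat \<Rightarrow> real" where
  "covariogram Y i j = 1/2 * measure_pmf.prob Y {A. (i \<in> A) \<noteq> (j \<in> A)}"

definition supra :: "nat \<Rightarrow> (nat \<Rightarrow> nat \<Rightarrow> real) \<Rightarrow> (nat \<times> nat \<Rightarrow> real)" where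
  "supra N \<gamma> = (\<lambda>(i, j). if 1 \<le> i \<and> i < j \<and> j \<le> N then \<gamma> i j else 0)"

definition covariograms :: "nat \<Rightarrow> (nat \<Rightarrow> nat \<Rightarrow> real) set" where
  "covariograms N = {covariogram Y | Y. random_subset N Y}"

definition covariograms_supra :: "nat \<Rightarrow> (nat \<times> nat \<Rightarrow> real) set" where
  "covariograms_supra N = supra N ` covariograms N"

definition cone_at :: "('a \<Rightarrow> real) \<Rightarrow> ('a \<Rightarrow> real) set \<Rightarrow> ('a \<Rightarrow> real) set" where
  "cone_at x C = {(\<lambda>p. x p + t * (c p - x p)) | t c. t \<ge> 0 \<and> c \<in> C}"

definition symmetric_mat :: "nat \<Rightarrow> (nat \<Rightarrow> nat \<Rightarrow> real) \<Rightarrow> bool" where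
  "symmetric_mat N M \<longleftrightarrow> (\<forall>i\<in>{1..N}. \<forall>j\<in>{1..N}. M i j = M j i)"

definition qform :: "nat \<Rightarrow> (nat \<Rightarrow> nat \<Rightarrow> real) \<Rightarrow> (nat \<Rightarrow> int) \<Rightarrow> real" where
  "qform N M e = (\<Sum>i=1..N. \<Sum>j=1..N. M i j * real_of_int (e i) * real_of_int (e j))"

definition E_set :: "nat \<Rightarrow> (nat \<Rightarrow> int) set" where
  "E_set N = {e. \<exists>u. (\<forall>i\<in>{1..N}. u i \<in> {-1, 1}) \<and> (\<Sum>i=1..N. u i * e i) = 1}"

end

theory Submission
  imports Defs "HOL-Analysis.Finite_Function_Topology"
begin

text \<open>Both (A) and (B) consist of an easy inclusion and a hard one; the easy ones hold
  unconditionally because for every sign vector x and every e with odd sum,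
  \<open>(\<Sum>i. x\<^sub>i e\<^sub>i)\<^sup>2 \<ge> 1\<close>. The cone of (A) is spanned by the matrices \<open>1 - \<rho>\<close> with \<open>\<rho>\<close> a unit
  covariance, which links the two hard inclusions.

  (A) \<Longrightarrow> (B): a non-unit-covariance \<open>\<rho>\<close> is strictly separated from the convex hull of the
  matrices \<open>x x\<^sup>T\<close> by weights W. Flipping signs by a sign vector u minimising
  \<open>\<Sum> W\<^sub>i\<^sub>j u\<^sub>i u\<^sub>j\<close> turns \<open>(1 - u\<^sub>i u\<^sub>j \<rho>\<^sub>i\<^sub>j)/4\<close> into a matrix satisfying the condition of (A),
  but the weights \<open>u\<^sub>i u\<^sub>j W\<^sub>i\<^sub>j\<close> are positive on it and nonpositive on the cone.

  (B) \<Longrightarrow> (A): if \<open>\<gamma>\<close> satisfies the condition of (A), then splitting an integer vector with sum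
  k into k integer vectors of sum 1 that differ pairwise by at most N + 1 bounds
  \<open>\<Sum> \<gamma>\<^sub>i\<^sub>j e\<^sub>i e\<^sub>j\<close> by \<open>O(k\<^sup>2)\<close>; hence \<open>1 - s \<gamma>\<close> satisfies the condition of (B) for small s > 0, is a
  unit covariance, and \<open>\<gamma>\<close> lies in the cone.\<close>

section \<open>Sign vectors and quadratic forms\<close>

lemma finite_sign_vectors: "finite (sign_vectors N)"
proof -
  have "sign_vectors N \<subseteq> {f. \<forall>x. (x \<in> {1..N} \<longrightarrow> f x \<in> {-1,1}) \<and> (x \<notin> {1..N} \<longrightarrow> f x = 0)}"
    unfolding sign_vectors_def by auto
  thus ?thesis using finite_set_of_finite_funs[of "{1..N}" "{-1,1::int}" 0] finite_subset by blast
qed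

lemma one_in_sign_vectors: "(\<lambda>i. if i \<in> {1..N} then 1 else 0) \<in> sign_vectors N"
  unfolding sign_vectors_def by auto

lemma mult_sign_vectors:
  assumes "u \<in> sign_vectors N" "x \<in> sign_vectors N"
  shows "(\<lambda>i. u i * x i) \<in> sign_vectors N"
proof -
  have "u i * x i \<in> {-1, 1}" if "i \<in> {1..N}" for i
  proof -
    have "u i \<in> {-1, 1}" "x i \<in> {-1, 1}" using assms that unfolding sign_vectors_def by auto
    thus ?thesis by auto
  qed
  thus ?thesis using assms unfolding sign_vectors_def by auto
qed

lemma odd_signed_sum_iff:
  assumes "\<forall>i\<in>{1..N}. u i \<in> {-1, 1::int}"
  shows "odd (\<Sum>i=1..N. u i * e i) \<longleftrightarrow> odd (\<Sum>i=1..N. e i)"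
proof -
  have "even ((u i - 1) * e i)" if "i \<in> {1..N}" for i
  proof -
    have "u i = -1 \<or> u i = 1" using assms that by auto
    thus ?thesis by auto
  qed
  hence "even (\<Sum>i=1..N. (u i - 1) * e i)" by (intro dvd_sum)
  moreover have "(\<Sum>i=1..N. (u i - 1) * e i) = (\<Sum>i=1..N. u i * e i) - (\<Sum>i=1..N. e i)"
    by (simp add: sum_subtractf algebra_simps)
  ultimately show ?thesis by simp
qed

lemma odd_sum_if_in_E_set:
  assumes "e \<in> E_set N"
  shows "odd (\<Sum>i=1..N. e i)"
proof -
  obtain u where "\<forall>i\<in>{1..N}. u i \<in> {-1, 1}" "(\<Sum>i=1..N. u i * e i) = 1"
    using assms unfolding E_set_def by blast
  thus ?thesis using odd_signed_sum_iff[of N u e] by simp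
qed

lemma one_le_square_if_odd: "odd (b::int) \<Longrightarrow> 1 \<le> (real_of_int b)\<^sup>2"
proof -
  assume "odd b"
  hence "1 \<le> \<bar>b\<bar>" by (cases "b = 0") auto
  hence "1 * 1 \<le> \<bar>b\<bar> * \<bar>b\<bar>" by (intro mult_mono) auto
  hence "1 \<le> b\<^sup>2" by (simp add: power2_eq_square abs_mult[symmetric])
  thus ?thesis by (metis of_int_1_le_iff of_int_power)
qed

lemma qform_cong:
  "(\<And>i j. i \<in> {1..N} \<Longrightarrow> j \<in> {1..N} \<Longrightarrow> M i j = M' i j) \<Longrightarrow> qform N M e = qform N M' e"
  unfolding qform_def by (intro sum.cong refl) auto

lemma qform_uminus: "qform N M (\<lambda>i. - e i) = qform N M e"
  unfolding qform_def by simp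

lemma qform_affine:
  "qform N (\<lambda>i j. a - s * M i j) e = a * (real_of_int (\<Sum>i=1..N. e i))\<^sup>2 - s * qform N M e"
  unfolding qform_def
  by (simp add: power2_eq_square sum_product sum_subtractf sum_distrib_left algebra_simps)

lemma qform_sign_twist:
  "qform N (\<lambda>i j. real_of_int (u i * u j) * M i j) e = qform N M (\<lambda>i. u i * e i)"
  unfolding qform_def by (simp add: algebra_simps)

lemma qform_outer_product:
  "qform N (\<lambda>i j. real_of_int (x i * x j)) e = (real_of_int (\<Sum>i=1..N. x i * e i))\<^sup>2"
  unfolding qform_def by (simp add: power2_eq_square sum_product algebra_simps)

section \<open>Unit covariances and covariograms\<close>

lemma integrable_unit_field:
  fixes f :: "(nat \<Rightarrow> int) \<Rightarrow> real"
  shows "unit_field N X \<Longrightarrow> integrable (measure_pmf X) f"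
  unfolding unit_field_def
  by (meson finite_subset finite_sign_vectors integrable_measure_pmf_finite)

lemma sum_weighted_unit_cov:
  assumes "unit_field N X"
  shows "(\<Sum>i=1..N. \<Sum>j=1..N. W i j * unit_cov_of X i j)
    = measure_pmf.expectation X (\<lambda>x. \<Sum>i=1..N. \<Sum>j=1..N. W i j * real_of_int (x i * x j))"
proof -
  have int: "integrable (measure_pmf X) f" for f :: "_ \<Rightarrow> real" using integrable_unit_field[OF assms] .
  have "measure_pmf.expectation X (\<lambda>x. \<Sum>i=1..N. \<Sum>j=1..N. W i j * real_of_int (x i * x j))
      = (\<Sum>i=1..N. \<Sum>j=1..N. measure_pmf.expectation X (\<lambda>x. W i j * real_of_int (x i * x j)))"
    by (simp only: Bochner_Integration.integral_sum[OF int])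
  thus ?thesis unfolding unit_cov_of_def by simp
qed

lemma qform_unit_cov:
  assumes "unit_field N X"
  shows "qform N (unit_cov_of X) e
    = measure_pmf.expectation X (\<lambda>x. (real_of_int (\<Sum>i=1..N. x i * e i))\<^sup>2)"
proof -
  have "qform N (unit_cov_of X) e
      = (\<Sum>i=1..N. \<Sum>j=1..N. real_of_int (e i * e j) * unit_cov_of X i j)"
    unfolding qform_def by (simp add: algebra_simps)
  also have "\<dots> = measure_pmf.expectation X (\<lambda>x. qform N (\<lambda>i j. real_of_int (x i * x j)) e)"
    unfolding sum_weighted_unit_cov[OF assms] qform_def by (simp add: algebra_simps)
  finally show ?thesis unfolding qform_outer_product .
qed

lemma one_le_qform_unit_cov:
  assumes "unit_field N X" "odd (\<Sum>i=1..N. e i)"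
  shows "1 \<le> qform N (unit_cov_of X) e"
  unfolding qform_unit_cov[OF assms(1)]
proof (rule measure_pmf.integral_ge_const[OF integrable_unit_field[OF assms(1)]])
  have "1 \<le> (real_of_int (\<Sum>i=1..N. x i * e i))\<^sup>2" if "x \<in> sign_vectors N" for x
    using that assms(2) odd_signed_sum_iff[of N x e]
    by (intro one_le_square_if_odd) (auto simp: sign_vectors_def)
  thus "AE x in measure_pmf X. 1 \<le> (real_of_int (\<Sum>i=1..N. x i * e i))\<^sup>2"
    using assms(1) unfolding unit_field_def AE_measure_pmf_iff by auto
qed

lemma one_le_qform_if_unit_covariance:
  assumes "unit_covariance N \<rho>" "odd (\<Sum>i=1..N. e i)"
  shows "1 \<le> qform N \<rho> e"
proof -
  obtain X where "unit_field N X" "\<forall>i\<in>{1..N}. \<forall>j\<in>{1..N}. \<rho> i j = unit_cov_of X i j"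
    using assms(1) unfolding unit_covariance_def by blast
  thus ?thesis using one_le_qform_unit_cov[OF _ assms(2)] qform_cong[of N \<rho> "unit_cov_of X"] by simp
qed

definition sign_vector_of :: "nat \<Rightarrow> nat set \<Rightarrow> nat \<Rightarrow> int" where
  "sign_vector_of N A i = (if i \<in> {1..N} then if i \<in> A then 1 else -1 else 0)"

lemma sign_vector_of_in_sign_vectors: "sign_vector_of N A \<in> sign_vectors N"
  unfolding sign_vector_of_def sign_vectors_def by auto

lemma unit_field_map_sign_vector_of: "unit_field N (map_pmf (sign_vector_of N) Y)"
  unfolding unit_field_def using sign_vector_of_in_sign_vectors by auto

lemma sign_vector_of_positive_part:
  "x \<in> sign_vectors N \<Longrightarrow> sign_vector_of N {i. x i = 1} = x"
proof
  fix i assume x: "x \<in> sign_vectors N"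
  show "sign_vector_of N {i. x i = 1} i = x i"
  proof (cases "i \<in> {1..N}")
    case True
    hence "x i = -1 \<or> x i = 1" using x unfolding sign_vectors_def by auto
    thus ?thesis using True unfolding sign_vector_of_def by auto
  next
    case False
    thus ?thesis using x unfolding sign_vectors_def sign_vector_of_def by auto
  qed
qed

lemma covariogram_eq_unit_cov:
  assumes "random_subset N Y" "i \<in> {1..N}" "j \<in> {1..N}"
  shows "covariogram Y i j = (1 - unit_cov_of (map_pmf (sign_vector_of N) Y) i j) / 4"
proof -
  define c where "c A = real_of_int (sign_vector_of N A i * sign_vector_of N A j)" for A
  have int: "integrable (measure_pmf Y) c"
    using assms(1) unfolding random_subset_def
    by (meson finite_Pow_iff finite_atLeastAtMost finite_subset integrable_measure_pmf_finite)
  have ind: "indicator {A. (i \<in> A) \<noteq> (j \<in> A)} = (\<lambda>A. (1 - c A) / 2)"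
    using assms(2,3) unfolding c_def sign_vector_of_def by (auto simp: indicator_def fun_eq_iff)
  have "measure_pmf.prob Y {A. (i \<in> A) \<noteq> (j \<in> A)}
      = measure_pmf.expectation Y (indicator {A. (i \<in> A) \<noteq> (j \<in> A)})"
    by simp
  also have "\<dots> = (1 - measure_pmf.expectation Y c) / 2"
    unfolding ind using int by simp
  also have "measure_pmf.expectation Y c = unit_cov_of (map_pmf (sign_vector_of N) Y) i j"
    unfolding unit_cov_of_def c_def by simp
  finally show ?thesis unfolding covariogram_def by simp
qed

lemma covariogram_commute: "covariogram Y i j = covariogram Y j i"
  unfolding covariogram_def by (metis (mono_tags, lifting))

lemma covariogram_diag: "covariogram Y i i = 0"
  unfolding covariogram_def by simp

lemma supra_in_cone_iff_covariogram:
  assumes "symmetric_mat N g" "\<forall>i\<in>{1..N}. g i i = 0"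
  shows "supra N g \<in> cone_at (\<lambda>_. 0) (covariograms_supra N) \<longleftrightarrow>
    (\<exists>t\<ge>0. \<exists>Y. random_subset N Y \<and> (\<forall>i\<in>{1..N}. \<forall>j\<in>{1..N}. g i j = t * covariogram Y i j))"
proof
  assume "supra N g \<in> cone_at (\<lambda>_. 0) (covariograms_supra N)"
  then obtain t Y where tY: "t \<ge> 0" "random_subset N Y" "supra N g = (\<lambda>p. t * supra N (covariogram Y) p)"
    unfolding cone_at_def covariograms_supra_def covariograms_def by auto
  have upper: "g i j = t * covariogram Y i j" if "1 \<le> i" "i < j" "j \<le> N" for i j
    using fun_cong[OF tY(3), of "(i, j)"] that unfolding supra_def by simp
  have "g i j = t * covariogram Y i j" if "i \<in> {1..N}" "j \<in> {1..N}" for i j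
    using that upper[of i j] upper[of j i] assms covariogram_commute[of Y i j]
    by (cases i j rule: linorder_cases) (auto simp: covariogram_diag symmetric_mat_def)
  thus "\<exists>t\<ge>0. \<exists>Y. random_subset N Y \<and> (\<forall>i\<in>{1..N}. \<forall>j\<in>{1..N}. g i j = t * covariogram Y i j)"
    using tY by blast
next
  assume "\<exists>t\<ge>0. \<exists>Y. random_subset N Y \<and> (\<forall>i\<in>{1..N}. \<forall>j\<in>{1..N}. g i j = t * covariogram Y i j)"
  then obtain t Y where tY: "t \<ge> 0" "random_subset N Y" "\<forall>i\<in>{1..N}. \<forall>j\<in>{1..N}. g i j = t * covariogram Y i j"
    by blast
  have "supra N g = (\<lambda>p. 0 + t * (supra N (covariogram Y) p - 0))"
    unfolding supra_def using tY(3) by (auto simp: fun_eq_iff)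
  moreover have "supra N (covariogram Y) \<in> covariograms_supra N"
    unfolding covariograms_supra_def covariograms_def using tY(2) by auto
  ultimately show "supra N g \<in> cone_at (\<lambda>_. 0) (covariograms_supra N)"
    unfolding cone_at_def using tY(1) by blast
qed

lemma supra_in_cone_iff_unit_cov:
  assumes "symmetric_mat N g" "\<forall>i\<in>{1..N}. g i i = 0"
  shows "supra N g \<in> cone_at (\<lambda>_. 0) (covariograms_supra N) \<longleftrightarrow>
    (\<exists>t\<ge>0. \<exists>X. unit_field N X \<and> (\<forall>i\<in>{1..N}. \<forall>j\<in>{1..N}. g i j = t * (1 - unit_cov_of X i j)))"
  unfolding supra_in_cone_iff_covariogram[OF assms]
proof safe
  fix t :: real and Y assume t: "t \<ge> 0" and Y: "random_subset N Y"
    and g: "\<forall>i\<in>{1..N}. \<forall>j\<in>{1..N}. g i j = t * covariogram Y i j"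
  have "g i j = t / 4 * (1 - unit_cov_of (map_pmf (sign_vector_of N) Y) i j)"
    if "i \<in> {1..N}" "j \<in> {1..N}" for i j
    using g that covariogram_eq_unit_cov[OF Y that] by simp
  moreover have "t / 4 \<ge> 0" using t by simp
  ultimately show "\<exists>t\<ge>0. \<exists>X. unit_field N X \<and> (\<forall>i\<in>{1..N}. \<forall>j\<in>{1..N}. g i j = t * (1 - unit_cov_of X i j))"
    using unit_field_map_sign_vector_of by blast
next
  fix t :: real and X assume t: "t \<ge> 0" and X: "unit_field N X"
    and g: "\<forall>i\<in>{1..N}. \<forall>j\<in>{1..N}. g i j = t * (1 - unit_cov_of X i j)"
  define Y where "Y = map_pmf (\<lambda>x. {i. x i = 1}) X"
  have Y: "random_subset N Y"
    using X unfolding random_subset_def unit_field_def Y_def sign_vectors_def by force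
  have "map_pmf (sign_vector_of N) Y = X"
    unfolding Y_def map_pmf_comp using X sign_vector_of_positive_part
    by (subst map_pmf_cong[of _ _ _ "\<lambda>x. x"]) (auto simp: unit_field_def)
  hence "g i j = 4 * t * covariogram Y i j" if "i \<in> {1..N}" "j \<in> {1..N}" for i j
    using g that covariogram_eq_unit_cov[OF Y that] by simp
  thus "\<exists>t\<ge>0. \<exists>Y. random_subset N Y \<and> (\<forall>i\<in>{1..N}. \<forall>j\<in>{1..N}. g i j = t * covariogram Y i j)"
    using t Y by (intro exI[of _ "4 * t"]) auto
qed

lemma qform_nonpos_if_supra_in_cone:
  assumes "supra N g \<in> cone_at (\<lambda>_. 0) (covariograms_supra N)"
    and "symmetric_mat N g" "\<forall>i\<in>{1..N}. g i i = 0" "(\<Sum>i=1..N. e i) = 1"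
  shows "qform N g e \<le> 0"
proof -
  obtain t X where t: "t \<ge> 0" and X: "unit_field N X"
    and g: "\<forall>i\<in>{1..N}. \<forall>j\<in>{1..N}. g i j = t - t * unit_cov_of X i j"
    using assms(1) unfolding supra_in_cone_iff_unit_cov[OF assms(2,3)] by (auto simp: algebra_simps)
  have sum_e: "real_of_int (\<Sum>i=1..N. e i) = 1" using assms(4) by simp
  have "qform N g e = qform N (\<lambda>i j. t - t * unit_cov_of X i j) e"
    using g by (intro qform_cong) auto
  also have "\<dots> = t - t * qform N (unit_cov_of X) e"
    unfolding qform_affine sum_e by simp
  also have "\<dots> \<le> 0"
    using mult_left_mono[OF one_le_qform_unit_cov[OF X] t] assms(4) by simp
  finally show ?thesis .
qed

section \<open>Quadratic growth under the condition of (A)\<close>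

definition bilinear_form :: "nat \<Rightarrow> (nat \<Rightarrow> nat \<Rightarrow> real) \<Rightarrow> (nat \<Rightarrow> real) \<Rightarrow> (nat \<Rightarrow> real) \<Rightarrow> real" where
  "bilinear_form N M a b = (\<Sum>i=1..N. \<Sum>j=1..N. M i j * a i * b j)"

lemma qform_eq_bilinear_form:
  "qform N M e = bilinear_form N M (\<lambda>i. real_of_int (e i)) (\<lambda>i. real_of_int (e i))"
  unfolding qform_def bilinear_form_def by simp

lemma bilinear_form_sum_left:
  "bilinear_form N M (\<lambda>i. \<Sum>m\<in>K. z m i) b = (\<Sum>m\<in>K. bilinear_form N M (z m) b)"
  unfolding bilinear_form_def
  by (simp add: sum_distrib_left sum_distrib_right sum.swap[of _ K] mult.assoc mult.left_commute)

lemma bilinear_form_sum_right: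
  "bilinear_form N M a (\<lambda>i. \<Sum>m\<in>K. z m i) = (\<Sum>m\<in>K. bilinear_form N M a (z m))"
  unfolding bilinear_form_def
  by (simp add: sum_distrib_left sum_distrib_right sum.swap[of _ K] mult.assoc mult.left_commute)

lemma bilinear_form_diff_diff:
  "bilinear_form N M (\<lambda>i. a i - b i) (\<lambda>i. a i - b i)
    = bilinear_form N M a a - bilinear_form N M a b - bilinear_form N M b a + bilinear_form N M b b"
  unfolding bilinear_form_def by (simp add: algebra_simps sum_subtractf sum.distrib)

lemma bilinear_form_sum_sum:
  assumes "finite K"
  shows "bilinear_form N M (\<lambda>i. \<Sum>m\<in>K. z m i) (\<lambda>i. \<Sum>m\<in>K. z m i)
    = real (card K) * (\<Sum>m\<in>K. bilinear_form N M (z m) (z m))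
      - (\<Sum>m\<in>K. \<Sum>l\<in>K. bilinear_form N M (\<lambda>i. z m i - z l i) (\<lambda>i. z m i - z l i)) / 2"
proof -
  let ?B = "\<lambda>m l. bilinear_form N M (z m) (z l)"
  have "(\<Sum>m\<in>K. \<Sum>l\<in>K. bilinear_form N M (\<lambda>i. z m i - z l i) (\<lambda>i. z m i - z l i))
      = (\<Sum>m\<in>K. \<Sum>l\<in>K. ?B m m) - (\<Sum>m\<in>K. \<Sum>l\<in>K. ?B m l)
        - (\<Sum>m\<in>K. \<Sum>l\<in>K. ?B l m) + (\<Sum>m\<in>K. \<Sum>l\<in>K. ?B l l)"
    by (simp add: bilinear_form_diff_diff sum_subtractf sum.distrib)
  also have "\<dots> = 2 * (real (card K) * (\<Sum>m\<in>K. ?B m m)) - 2 * (\<Sum>m\<in>K. \<Sum>l\<in>K. ?B m l)"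
  proof -
    have "(\<Sum>m\<in>K. \<Sum>l\<in>K. ?B m m) = real (card K) * (\<Sum>m\<in>K. ?B m m)"
      "(\<Sum>m\<in>K. \<Sum>l\<in>K. ?B l l) = real (card K) * (\<Sum>m\<in>K. ?B m m)"
      by (simp_all add: sum_distrib_left)
    moreover have "(\<Sum>m\<in>K. \<Sum>l\<in>K. ?B l m) = (\<Sum>m\<in>K. \<Sum>l\<in>K. ?B m l)"
      by (rule sum.swap)
    ultimately show ?thesis by simp
  qed
  moreover have "bilinear_form N M (\<lambda>i. \<Sum>m\<in>K. z m i) (\<lambda>i. \<Sum>m\<in>K. z m i) = (\<Sum>m\<in>K. \<Sum>l\<in>K. ?B m l)"
    by (simp add: bilinear_form_sum_left bilinear_form_sum_right)
  ultimately show ?thesis by linarith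
qed

lemma abs_bilinear_form_le:
  assumes "\<And>i. i \<in> {1..N} \<Longrightarrow> \<bar>d i\<bar> \<le> R"
  shows "\<bar>bilinear_form N M d d\<bar> \<le> (\<Sum>i=1..N. \<Sum>j=1..N. \<bar>M i j\<bar>) * R\<^sup>2"
proof -
  have "\<bar>bilinear_form N M d d\<bar> \<le> (\<Sum>i=1..N. \<Sum>j=1..N. \<bar>M i j * d i * d j\<bar>)"
    unfolding bilinear_form_def by (rule order.trans[OF sum_abs]) (intro sum_mono sum_abs)
  also have "\<dots> \<le> (\<Sum>i=1..N. \<Sum>j=1..N. \<bar>M i j\<bar> * R\<^sup>2)"
  proof (intro sum_mono)
    fix i j assume "i \<in> {1..N}" "j \<in> {1..N}"
    hence "\<bar>d i\<bar> \<le> R" "\<bar>d j\<bar> \<le> R" using assms by auto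
    hence "\<bar>d i\<bar> * \<bar>d j\<bar> \<le> R * R" by (intro mult_mono) auto
    thus "\<bar>M i j * d i * d j\<bar> \<le> \<bar>M i j\<bar> * R\<^sup>2"
      by (simp add: abs_mult power2_eq_square mult.assoc mult_left_mono)
  qed
  also have "\<dots> = (\<Sum>i=1..N. \<Sum>j=1..N. \<bar>M i j\<bar>) * R\<^sup>2" by (simp add: sum_distrib_right)
  finally show ?thesis .
qed

lemma sum_div_shift_succ:
  assumes "k > 0"
  shows "(\<Sum>m<k. (x + 1 + int m) div int k) = (\<Sum>m<k. (x + int m) div int k) + 1"
proof -
  define g where "g m = (x + int m) div int k" for m
  have "(\<Sum>m<k. g (Suc m)) + g 0 = (\<Sum>m<Suc k. g m)"
    by (subst sum.lessThan_Suc_shift) simp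
  also have "\<dots> = (\<Sum>m<k. g m) + g k" by simp
  also have "g k = g 0 + 1"
    using assms unfolding g_def by simp
  finally show ?thesis unfolding g_def by (simp add: algebra_simps)
qed

lemma hermite_identity:
  assumes "k > 0"
  shows "(\<Sum>m<k. (x + int m) div int k) = x"
proof (induction x rule: int_induct[where k = 0])
  case base
  thus ?case by (simp add: div_pos_pos_trivial)
next
  case (step1 i)
  thus ?case using sum_div_shift_succ[OF assms, of i] by simp
next
  case (step2 i)
  thus ?case using sum_div_shift_succ[OF assms, of "i - 1"] by simp
qed

text \<open>The shifted quotients \<open>\<lfloor>(e\<^sub>i + m)/k\<rfloor>\<close>, m < k, sum to \<open>e\<^sub>i\<close> by Hermite's identity and differ
  pairwise by at most one; correcting their first coordinate makes each of them sum to 1.\<close>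

lemma splitting_into_unit_sums:
  fixes e :: "nat \<Rightarrow> int" and k :: nat
  assumes "N \<ge> 1" "k \<ge> 1" "(\<Sum>i=1..N. e i) = int k"
  obtains z :: "nat \<Rightarrow> nat \<Rightarrow> int"
  where "\<And>m. (\<Sum>i=1..N. z m i) = 1" and "\<And>i. (\<Sum>m<k. z m i) = e i"
    and "\<And>m l i. m < k \<Longrightarrow> l < k \<Longrightarrow> \<bar>z m i - z l i\<bar> \<le> int N + 1"
proof
  define y where "y m i = (e i + int m) div int k" for m i
  define s where "s m = (\<Sum>i=1..N. y m i)" for m
  define z where "z m i = y m i + (if i = 1 then 1 - s m else 0)" for m i
  have one: "1 \<in> {1..N}" using assms(1) by simp
  show "(\<Sum>i=1..N. z m i) = 1" for m
    unfolding z_def s_def using one by (simp add: sum.distrib)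
  have y_sum: "(\<Sum>m<k. y m i) = e i" for i
    unfolding y_def using hermite_identity assms(2) by simp
  have "(\<Sum>m<k. s m) = (\<Sum>i=1..N. \<Sum>m<k. y m i)"
    unfolding s_def by (rule sum.swap)
  hence "(\<Sum>m<k. s m) = int k" using y_sum assms(3) by simp
  thus "(\<Sum>m<k. z m i) = e i" for i
    unfolding z_def using y_sum by (cases "i = 1") (simp_all add: sum.distrib sum_subtractf)
  have y_le: "y m i \<le> y l i + 1" if "m < k" "l < k" for m l i
  proof -
    have "y m i \<le> (e i + int l + int k) div int k"
      unfolding y_def using that by (intro zdiv_mono1) auto
    also have "\<dots> = y l i + 1"
      unfolding y_def using assms(2) by simp
    finally show ?thesis .
  qed
  have y_close: "\<bar>y m i - y l i\<bar> \<le> 1" if "m < k" "l < k" for m l i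
    using y_le[OF that, of i] y_le[OF that(2,1), of i] by (simp add: abs_le_iff)
  have s_close: "\<bar>s m - s l\<bar> \<le> int N" if "m < k" "l < k" for m l
  proof -
    have "\<bar>s m - s l\<bar> \<le> (\<Sum>i=1..N. \<bar>y m i - y l i\<bar>)"
      unfolding s_def sum_subtractf[symmetric] by (rule sum_abs)
    also have "\<dots> \<le> (\<Sum>i=1..N. 1)" using y_close[OF that] by (intro sum_mono) auto
    finally show ?thesis by simp
  qed
  show "\<bar>z m i - z l i\<bar> \<le> int N + 1" if "m < k" "l < k" for m l i
    using y_close[OF that, of i] s_close[OF that] unfolding z_def by auto
qed

lemma qform_le_if_unit_sums_nonpos:
  fixes k :: nat
  assumes "N \<ge> 1"
    and nonpos: "\<forall>e::nat \<Rightarrow> int. (\<Sum>i=1..N. e i) = 1 \<longrightarrow> qform N M e \<le> 0"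
    and k: "k \<ge> 1" "(\<Sum>i=1..N. e i) = int k"
  shows "qform N M e \<le> (real k)\<^sup>2 / 2 * ((\<Sum>i=1..N. \<Sum>j=1..N. \<bar>M i j\<bar>) * (real N + 1)\<^sup>2)"
proof -
  define C where "C = (\<Sum>i=1..N. \<Sum>j=1..N. \<bar>M i j\<bar>) * (real N + 1)\<^sup>2"
  obtain z where z_sum: "\<And>m. (\<Sum>i=1..N. z m i) = 1" and z_split: "\<And>i. (\<Sum>m<k. z m i) = e i"
    and z_close: "\<And>m l i. m < k \<Longrightarrow> l < k \<Longrightarrow> \<bar>z m i - z l i\<bar> \<le> int N + 1"
    using splitting_into_unit_sums[OF assms(1) k] by blast
  define Z where "Z m i = real_of_int (z m i)" for m i
  let ?D = "\<lambda>m l. bilinear_form N M (\<lambda>i. Z m i - Z l i) (\<lambda>i. Z m i - Z l i)"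
  have "qform N M e = bilinear_form N M (\<lambda>i. \<Sum>m<k. Z m i) (\<lambda>i. \<Sum>m<k. Z m i)"
    unfolding qform_eq_bilinear_form Z_def by (simp add: z_split flip: of_int_sum)
  also have "\<dots> = real k * (\<Sum>m<k. bilinear_form N M (Z m) (Z m)) - (\<Sum>m<k. \<Sum>l<k. ?D m l) / 2"
    using bilinear_form_sum_sum[of "{..<k}" N M Z] by simp
  also have "\<dots> \<le> (\<Sum>m<k. \<Sum>l<k. C) / 2"
  proof -
    have "bilinear_form N M (Z m) (Z m) \<le> 0" for m
      using nonpos z_sum unfolding Z_def qform_eq_bilinear_form by blast
    hence "real k * (\<Sum>m<k. bilinear_form N M (Z m) (Z m)) \<le> 0"
      by (intro mult_nonneg_nonpos sum_nonpos) auto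
    moreover have "- ?D m l \<le> C" if "m < k" "l < k" for m l
    proof -
      have "real_of_int \<bar>z m i - z l i\<bar> \<le> real_of_int (int N + 1)" for i
        using z_close[OF that] by (simp only: of_int_le_iff)
      hence "\<bar>Z m i - Z l i\<bar> \<le> real N + 1" for i unfolding Z_def by simp
      thus ?thesis
        using abs_bilinear_form_le[of N "\<lambda>i. Z m i - Z l i" "real N + 1" M] unfolding C_def
        by (meson abs_le_D2)
    qed
    hence "(\<Sum>m<k. \<Sum>l<k. - ?D m l) \<le> (\<Sum>m<k. \<Sum>l<k. C)"
      by (intro sum_mono) auto
    hence "- (\<Sum>m<k. \<Sum>l<k. ?D m l) \<le> (\<Sum>m<k. \<Sum>l<k. C)"
      by (simp only: sum_negf)
    ultimately show ?thesis by linarith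
  qed
  also have "\<dots> = (real k)\<^sup>2 / 2 * C"
    by (simp add: power2_eq_square)
  finally show ?thesis unfolding C_def .
qed

lemma qform_le_if_unit_sums_nonpos_nonzero_sum:
  assumes "N \<ge> 1"
    and nonpos: "\<forall>e::nat \<Rightarrow> int. (\<Sum>i=1..N. e i) = 1 \<longrightarrow> qform N M e \<le> 0"
    and "(\<Sum>i=1..N. e i) \<noteq> 0"
  shows "qform N M e
    \<le> (real_of_int (\<Sum>i=1..N. e i))\<^sup>2 / 2 * ((\<Sum>i=1..N. \<Sum>j=1..N. \<bar>M i j\<bar>) * (real N + 1)\<^sup>2)"
proof (cases "(\<Sum>i=1..N. e i) > 0")
  case True
  thus ?thesis
    using qform_le_if_unit_sums_nonpos[OF assms(1) nonpos, of "nat (\<Sum>i=1..N. e i)" e] by simp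
next
  case False
  hence "(\<Sum>i=1..N. - e i) > 0" using assms(3) by (simp add: sum_negf)
  thus ?thesis
    using qform_le_if_unit_sums_nonpos[OF assms(1) nonpos, of "nat (\<Sum>i=1..N. - e i)" "\<lambda>i. - e i"]
    by (simp add: qform_uminus sum_negf)
qed

lemma one_le_qform_shift_if_unit_sums_nonpos:
  assumes "N \<ge> 1"
    and nonpos: "\<forall>e::nat \<Rightarrow> int. (\<Sum>i=1..N. e i) = 1 \<longrightarrow> qform N M e \<le> 0"
    and s: "s \<ge> 0" "s * ((\<Sum>i=1..N. \<Sum>j=1..N. \<bar>M i j\<bar>) * (real N + 1)\<^sup>2) \<le> 1"
    and "odd (\<Sum>i=1..N. e i)"
  shows "1 \<le> qform N (\<lambda>i j. 1 - s * M i j) e"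
proof -
  define k where "k = (\<Sum>i=1..N. e i)"
  have q: "qform N (\<lambda>i j. 1 - s * M i j) e = (real_of_int k)\<^sup>2 - s * qform N M e"
    unfolding qform_affine k_def by simp
  have "k \<noteq> 0" using assms(5) unfolding k_def by auto
  then consider "k = 1" | "k = -1" | "\<bar>k\<bar> \<ge> 2" by linarith
  thus ?thesis
  proof cases
    case 1
    thus ?thesis using q nonpos s(1) unfolding k_def by (simp add: mult_nonneg_nonpos)
  next
    case 2
    hence "qform N M (\<lambda>i. - e i) \<le> 0" using nonpos unfolding k_def by (simp add: sum_negf)
    thus ?thesis using q 2 s(1) by (simp add: qform_uminus mult_nonneg_nonpos)
  next
    case 3
    have "4 \<le> (real_of_int k)\<^sup>2"
      using 3 power_mono[of 2 "\<bar>real_of_int k\<bar>" 2] by simp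
    moreover have "s * qform N M e \<le> s * ((real_of_int k)\<^sup>2 / 2 * ((\<Sum>i=1..N. \<Sum>j=1..N. \<bar>M i j\<bar>) * (real N + 1)\<^sup>2))"
      using qform_le_if_unit_sums_nonpos_nonzero_sum[OF assms(1) nonpos] \<open>k \<noteq> 0\<close> s(1)
      unfolding k_def by (intro mult_left_mono) auto
    moreover have "\<dots> \<le> (real_of_int k)\<^sup>2 / 2"
      using mult_left_mono[OF s(2), of "(real_of_int k)\<^sup>2 / 2"] by (simp add: algebra_simps)
    ultimately show ?thesis using q by linarith
  qed
qed

section \<open>Separation from the convex hull of the sign-vector matrices\<close>

text \<open>Matrices are embedded into the normed space of finitely supported functions on index pairs,
  where convex hulls of finite sets are compact.\<close>

lemma lookup_scaleR_poly_mapping: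
  fixes p :: "'a \<Rightarrow>\<^sub>0 'b::real_vector"
  shows "Poly_Mapping.lookup (r *\<^sub>R p) k = r *\<^sub>R Poly_Mapping.lookup p k"
proof -
  have "finite {i. r *\<^sub>R Poly_Mapping.lookup p i \<noteq> 0}"
    by (rule finite_subset[OF _ finite_keys[of p]]) (auto simp: in_keys_iff)
  thus ?thesis unfolding scaleR_poly_mapping_def by simp
qed

lemma norm_lookup_le_norm:
  fixes p :: "'a \<Rightarrow>\<^sub>0 'b::real_normed_vector"
  shows "norm (Poly_Mapping.lookup p k) \<le> norm p"
proof (cases "k \<in> Poly_Mapping.keys p")
  case True
  have "norm p = (\<Sum>n\<in>Poly_Mapping.keys p. norm (Poly_Mapping.lookup p n))"
    by (simp add: norm_poly_mapping_def dist_poly_mapping_def dist_norm)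
  moreover have "norm (Poly_Mapping.lookup p k) \<le> (\<Sum>n\<in>Poly_Mapping.keys p. norm (Poly_Mapping.lookup p n))"
    by (intro member_le_sum True) auto
  ultimately show ?thesis by simp
qed (simp add: in_keys_iff)

lemma bounded_linear_lookup:
  "bounded_linear (\<lambda>p :: 'a \<Rightarrow>\<^sub>0 'b::real_normed_vector. Poly_Mapping.lookup p k)"
  by (rule bounded_linear_intro[where K = 1])
    (auto simp: lookup_add lookup_scaleR_poly_mapping norm_lookup_le_norm)

lemma sum_squares_min_variational:
  fixes K :: "('a \<Rightarrow>\<^sub>0 real) set"
  assumes "convex K" "p \<in> K" "y \<in> K"
    and min: "\<forall>q\<in>K. (\<Sum>k\<in>I. (Poly_Mapping.lookup p k - r k)\<^sup>2) \<le> (\<Sum>k\<in>I. (Poly_Mapping.lookup q k - r k)\<^sup>2)"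
  shows "0 \<le> (\<Sum>k\<in>I. (Poly_Mapping.lookup p k - r k) * (Poly_Mapping.lookup y k - Poly_Mapping.lookup p k))"
proof (rule ccontr)
  define d where "d q = (\<Sum>k\<in>I. (Poly_Mapping.lookup q k - r k)\<^sup>2)" for q
  define A where "A = (\<Sum>k\<in>I. (Poly_Mapping.lookup p k - r k) * (Poly_Mapping.lookup y k - Poly_Mapping.lookup p k))"
  define B where "B = (\<Sum>k\<in>I. (Poly_Mapping.lookup y k - Poly_Mapping.lookup p k)\<^sup>2)"
  assume "\<not> 0 \<le> (\<Sum>k\<in>I. (Poly_Mapping.lookup p k - r k) * (Poly_Mapping.lookup y k - Poly_Mapping.lookup p k))"
  hence A: "A < 0" unfolding A_def by simp
  have B: "B \<ge> 0" unfolding B_def by (intro sum_nonneg) auto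
  have expand: "d ((1 - t) *\<^sub>R p + t *\<^sub>R y) = d p + 2 * t * A + t\<^sup>2 * B" for t
  proof -
    have pt: "Poly_Mapping.lookup ((1 - t) *\<^sub>R p + t *\<^sub>R y) k - r k
        = (Poly_Mapping.lookup p k - r k) + t * (Poly_Mapping.lookup y k - Poly_Mapping.lookup p k)" for k
      by (simp only: lookup_add lookup_scaleR_poly_mapping) (simp add: algebra_simps)
    have "d ((1 - t) *\<^sub>R p + t *\<^sub>R y)
        = (\<Sum>k\<in>I. (Poly_Mapping.lookup p k - r k)\<^sup>2
            + 2 * t * ((Poly_Mapping.lookup p k - r k) * (Poly_Mapping.lookup y k - Poly_Mapping.lookup p k))
            + t\<^sup>2 * (Poly_Mapping.lookup y k - Poly_Mapping.lookup p k)\<^sup>2)"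
      unfolding d_def pt by (intro sum.cong refl) (simp add: power2_eq_square algebra_simps)
    thus ?thesis unfolding d_def A_def B_def by (simp add: sum.distrib sum_distrib_left)
  qed
  define t where "t = (if B \<le> - A then 1 else - A / B)"
  have t: "0 < t" "t \<le> 1" "t * B \<le> - A" using A B unfolding t_def by (auto simp: field_simps)
  have "(1 - t) *\<^sub>R p + t *\<^sub>R y \<in> K" using assms(1-3) t by (intro convexD) auto
  hence "d p \<le> d p + 2 * t * A + t\<^sup>2 * B" using min expand unfolding d_def by metis
  hence "0 \<le> t * (2 * A + t * B)" by (simp add: power2_eq_square algebra_simps)
  moreover have "t * (2 * A + t * B) < 0" using t A by (intro mult_pos_neg) auto
  ultimately show False by simp
qed

lemma separation_from_convex_hull:
  fixes V :: "('a \<Rightarrow>\<^sub>0 real) set" and r :: "'a \<Rightarrow> real"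
  assumes "finite I" "finite V" "V \<noteq> {}"
    and outside: "\<forall>p\<in>convex hull V. \<exists>k\<in>I. Poly_Mapping.lookup p k \<noteq> r k"
  obtains W where "\<forall>v\<in>V. (\<Sum>k\<in>I. W k * r k) < (\<Sum>k\<in>I. W k * Poly_Mapping.lookup v k)"
proof -
  define d where "d q = (\<Sum>k\<in>I. (Poly_Mapping.lookup q k - r k)\<^sup>2)" for q
  have "continuous_on (convex hull V) d"
    unfolding d_def by (intro continuous_intros linear_continuous_on[OF bounded_linear_lookup])
  then obtain p where p: "p \<in> convex hull V" "\<forall>q\<in>convex hull V. d p \<le> d q"
    using continuous_attains_inf[OF finite_imp_compact_convex_hull[OF assms(2)]] assms(3) by auto
  define W where "W k = Poly_Mapping.lookup p k - r k" for k
  have "d p \<noteq> 0"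
  proof
    assume "d p = 0"
    hence "\<forall>k\<in>I. Poly_Mapping.lookup p k = r k"
      unfolding d_def using assms(1) by (simp add: sum_nonneg_eq_0_iff)
    thus False using outside p(1) by blast
  qed
  hence d_pos: "d p > 0" unfolding d_def by (simp add: order_less_le sum_nonneg)
  have "(\<Sum>k\<in>I. W k * r k) < (\<Sum>k\<in>I. W k * Poly_Mapping.lookup v k)" if "v \<in> V" for v
  proof -
    have "0 \<le> (\<Sum>k\<in>I. W k * (Poly_Mapping.lookup v k - Poly_Mapping.lookup p k))"
      using sum_squares_min_variational[OF convex_convex_hull p(1) hull_inc[OF that]] p(2)
      unfolding W_def d_def by blast
    moreover have "(\<Sum>k\<in>I. W k * Poly_Mapping.lookup p k) = (\<Sum>k\<in>I. W k * r k + (Poly_Mapping.lookup p k - r k)\<^sup>2)"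
      unfolding W_def by (intro sum.cong refl) (simp add: power2_eq_square algebra_simps)
    hence "(\<Sum>k\<in>I. W k * Poly_Mapping.lookup p k) = (\<Sum>k\<in>I. W k * r k) + d p"
      unfolding d_def by (simp add: sum.distrib)
    ultimately show ?thesis using d_pos by (simp add: right_diff_distrib sum_subtractf)
  qed
  thus ?thesis using that by blast
qed

definition cov_vertex :: "nat \<Rightarrow> (nat \<Rightarrow> int) \<Rightarrow> (nat \<times> nat) \<Rightarrow>\<^sub>0 real" where
  "cov_vertex N x = Abs_poly_mapping
     (\<lambda>(i, j). if i \<in> {1..N} \<and> j \<in> {1..N} then real_of_int (x i * x j) else 0)"

lemma lookup_cov_vertex:
  "Poly_Mapping.lookup (cov_vertex N x) (i, j)
    = (if i \<in> {1..N} \<and> j \<in> {1..N} then real_of_int (x i * x j) else 0)"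
proof -
  have "finite {k. (\<lambda>(i, j). if i \<in> {1..N} \<and> j \<in> {1..N} then real_of_int (x i * x j) else 0) k \<noteq> 0}"
    by (rule finite_subset[of _ "{1..N} \<times> {1..N}"]) (auto split: if_splits)
  thus ?thesis unfolding cov_vertex_def by simp
qed

lemma exists_pmf_with_weights:
  assumes "finite T" "\<forall>y\<in>T. 0 \<le> w y" "sum w T = 1"
  obtains Y where "set_pmf Y \<subseteq> T" "\<forall>y\<in>T. pmf Y y = w y"
proof -
  define w' where "w' y = (if y \<in> T then w y else 0)" for y
  have nonneg: "0 \<le> w' y" for y unfolding w'_def using assms(2) by simp
  have "(\<integral>\<^sup>+y. ennreal (w' y) \<partial>count_space UNIV) = (\<Sum>y\<in>T. ennreal (w' y))"
    by (rule nn_integral_count_space'[OF assms(1)]) (auto simp: w'_def)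
  also have "\<dots> = ennreal (sum w' T)" using nonneg by (intro sum_ennreal)
  also have "\<dots> = 1" using assms(3) by (simp add: w'_def)
  finally have "(\<integral>\<^sup>+y. ennreal (w' y) \<partial>count_space UNIV) = 1" .
  hence "set_pmf (embed_pmf w') \<subseteq> T" "\<forall>y\<in>T. pmf (embed_pmf w') y = w y"
    using nonneg pmf_embed_pmf[of w'] set_embed_pmf[of w'] by (auto simp: w'_def)
  thus ?thesis using that by blast
qed

lemma unit_cov_of_convex_hull_cov_vertex:
  assumes "p \<in> convex hull (cov_vertex N ` sign_vectors N)"
  obtains X where "unit_field N X"
    "\<forall>i\<in>{1..N}. \<forall>j\<in>{1..N}. unit_cov_of X i j = Poly_Mapping.lookup p (i, j)"
proof -
  define T where "T = cov_vertex N ` sign_vectors N"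
  have T: "finite T" unfolding T_def using finite_sign_vectors by simp
  obtain w where w: "\<forall>y\<in>T. 0 \<le> w y" "sum w T = 1" "(\<Sum>y\<in>T. w y *\<^sub>R y) = p"
    using assms convex_hull_finite[OF T] unfolding T_def by auto
  obtain Y where Y: "set_pmf Y \<subseteq> T" "\<forall>y\<in>T. pmf Y y = w y"
    using exists_pmf_with_weights[OF T w(1,2)] by blast
  \<comment> \<open>x and -x have the same matrix, so Y is pulled back along a section of cov_vertex.\<close>
  define \<sigma> where "\<sigma> = inv_into (sign_vectors N) (cov_vertex N)"
  have \<sigma>: "\<sigma> y \<in> sign_vectors N" "cov_vertex N (\<sigma> y) = y" if "y \<in> T" for y
    using that unfolding \<sigma>_def T_def by (simp_all add: inv_into_into f_inv_into_f)
  define X where "X = map_pmf \<sigma> Y"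
  have "unit_field N X" unfolding unit_field_def X_def using Y(1) \<sigma>(1) by auto
  moreover have "unit_cov_of X i j = Poly_Mapping.lookup p (i, j)"
    if "i \<in> {1..N}" "j \<in> {1..N}" for i j
  proof -
    have "unit_cov_of X i j = measure_pmf.expectation Y (\<lambda>y. Poly_Mapping.lookup (cov_vertex N (\<sigma> y)) (i, j))"
      unfolding unit_cov_of_def X_def using that by (simp add: lookup_cov_vertex)
    also have "\<dots> = measure_pmf.expectation Y (\<lambda>y. Poly_Mapping.lookup y (i, j))"
      using Y(1) \<sigma>(2) by (intro integral_cong_AE) (auto simp: AE_measure_pmf_iff)
    also have "\<dots> = (\<Sum>y\<in>T. w y * Poly_Mapping.lookup y (i, j))"
      using Y by (subst integral_measure_pmf_real[OF T]) (auto simp: mult.commute)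
    also have "\<dots> = Poly_Mapping.lookup p (i, j)"
      unfolding w(3)[symmetric] lookup_sum by (simp add: lookup_scaleR_poly_mapping)
    finally show ?thesis .
  qed
  ultimately show ?thesis using that by blast
qed

lemma unit_covariance_separation:
  assumes "\<not> unit_covariance N \<rho>"
  obtains W where "\<forall>x\<in>sign_vectors N.
    (\<Sum>i=1..N. \<Sum>j=1..N. W i j * \<rho> i j) < (\<Sum>i=1..N. \<Sum>j=1..N. W i j * real_of_int (x i * x j))"
proof -
  have "\<forall>p\<in>convex hull (cov_vertex N ` sign_vectors N).
    \<exists>k\<in>{1..N} \<times> {1..N}. Poly_Mapping.lookup p k \<noteq> case_prod \<rho> k"
  proof (rule ccontr)
    assume "\<not> ?thesis"
    then obtain p where "p \<in> convex hull (cov_vertex N ` sign_vectors N)"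
      "\<forall>i\<in>{1..N}. \<forall>j\<in>{1..N}. Poly_Mapping.lookup p (i, j) = \<rho> i j" by auto
    thus False
      using assms unit_cov_of_convex_hull_cov_vertex unfolding unit_covariance_def by metis
  qed
  then obtain W where W: "\<forall>v\<in>cov_vertex N ` sign_vectors N.
      (\<Sum>k\<in>{1..N} \<times> {1..N}. W k * case_prod \<rho> k) < (\<Sum>k\<in>{1..N} \<times> {1..N}. W k * Poly_Mapping.lookup v k)"
    using separation_from_convex_hull[of "{1..N} \<times> {1..N}" "cov_vertex N ` sign_vectors N"]
      finite_sign_vectors one_in_sign_vectors by blast
  have pair_sum: "(\<Sum>k\<in>{1..N} \<times> {1..N}. f k) = (\<Sum>i=1..N. \<Sum>j=1..N. f (i, j))" for f :: "nat \<times> nat \<Rightarrow> real"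
    by (simp add: sum.cartesian_product)
  have lookup_sum: "(\<Sum>i=1..N. \<Sum>j=1..N. W (i, j) * Poly_Mapping.lookup (cov_vertex N x) (i, j))
      = (\<Sum>i=1..N. \<Sum>j=1..N. W (i, j) * real_of_int (x i * x j))" for x
    by (intro sum.cong refl) (simp add: lookup_cov_vertex)
  show ?thesis
  proof (rule that[of "\<lambda>i j. W (i, j)"], intro ballI)
    fix x assume "x \<in> sign_vectors N"
    hence "(\<Sum>k\<in>{1..N} \<times> {1..N}. W k * case_prod \<rho> k)
        < (\<Sum>k\<in>{1..N} \<times> {1..N}. W k * Poly_Mapping.lookup (cov_vertex N x) k)"
      using W by blast
    thus "(\<Sum>i=1..N. \<Sum>j=1..N. W (i, j) * \<rho> i j)
        < (\<Sum>i=1..N. \<Sum>j=1..N. W (i, j) * real_of_int (x i * x j))"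
      unfolding pair_sum lookup_sum by simp
  qed
qed

section \<open>The two hard inclusions imply each other\<close>

lemma sign_weighted_sum_one_minus_unit_cov_nonpos:
  fixes N :: nat and W :: "nat \<Rightarrow> nat \<Rightarrow> real"
  defines "F x \<equiv> \<Sum>i=1..N. \<Sum>j=1..N. W i j * real_of_int (x i * x j)"
  assumes u: "u \<in> sign_vectors N" "\<forall>x\<in>sign_vectors N. F u \<le> F x" and X: "unit_field N X"
  shows "(\<Sum>i=1..N. \<Sum>j=1..N. real_of_int (u i * u j) * W i j * (1 - unit_cov_of X i j)) \<le> 0"
proof -
  have "(\<Sum>i=1..N. \<Sum>j=1..N. real_of_int (u i * u j) * W i j * (1 - unit_cov_of X i j))
      = (\<Sum>i=1..N. \<Sum>j=1..N. W i j * real_of_int (u i * u j)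
          - (real_of_int (u i * u j) * W i j) * unit_cov_of X i j)"
    by (intro sum.cong refl) (simp add: algebra_simps)
  also have "\<dots> = F u - (\<Sum>i=1..N. \<Sum>j=1..N. (real_of_int (u i * u j) * W i j) * unit_cov_of X i j)"
    unfolding F_def by (simp only: sum_subtractf)
  also have "(\<Sum>i=1..N. \<Sum>j=1..N. (real_of_int (u i * u j) * W i j) * unit_cov_of X i j)
      = measure_pmf.expectation X (\<lambda>x. F (\<lambda>i. u i * x i))"
    unfolding sum_weighted_unit_cov[OF X] F_def by (simp add: algebra_simps)
  also have "F u \<le> measure_pmf.expectation X (\<lambda>x. F (\<lambda>i. u i * x i))"
  proof (rule measure_pmf.integral_ge_const[OF integrable_unit_field[OF X]])
    have "(\<lambda>i. u i * x i) \<in> sign_vectors N" if "x \<in> sign_vectors N" for x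
      using u(1) that by (rule mult_sign_vectors)
    thus "AE x in measure_pmf X. F u \<le> F (\<lambda>i. u i * x i)"
      using X u(2) unfolding unit_field_def AE_measure_pmf_iff by auto
  qed
  finally show ?thesis by simp
qed

lemma qform_sign_flip_nonpos:
  assumes "\<forall>i\<in>{1..N}. u i \<in> {-1, 1}" "\<forall>e\<in>E_set N. 1 \<le> qform N \<rho> e" "(\<Sum>i=1..N. e i) = 1"
  shows "qform N (\<lambda>i j. 1/4 - 1/4 * (real_of_int (u i * u j) * \<rho> i j)) e \<le> 0"
proof -
  have "u i * (u i * e i) = e i" if "i \<in> {1..N}" for i
  proof -
    have "u i = -1 \<or> u i = 1" using assms(1) that by auto
    thus ?thesis by auto
  qed
  hence "(\<Sum>i=1..N. u i * (u i * e i)) = (\<Sum>i=1..N. e i)" by (intro sum.cong refl)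
  hence "(\<lambda>i. u i * e i) \<in> E_set N" using assms(1,3) unfolding E_set_def by auto
  hence "1 \<le> qform N \<rho> (\<lambda>i. u i * e i)" using assms(2) by blast
  thus ?thesis unfolding qform_affine qform_sign_twist using assms(3) by simp
qed

lemma unit_covariance_if_matheron:
  assumes matheron: "\<And>g. symmetric_mat N g \<Longrightarrow> (\<forall>i\<in>{1..N}. g i i = 0) \<Longrightarrow>
      (\<forall>e::nat \<Rightarrow> int. (\<Sum>i=1..N. e i) = 1 \<longrightarrow> qform N g e \<le> 0) \<Longrightarrow>
      supra N g \<in> cone_at (\<lambda>_. 0) (covariograms_supra N)"
    and "symmetric_mat N \<rho>" "\<forall>i\<in>{1..N}. \<rho> i i = 1" "\<forall>e\<in>E_set N. 1 \<le> qform N \<rho> e"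
  shows "unit_covariance N \<rho>"
proof (rule ccontr)
  assume "\<not> unit_covariance N \<rho>"
  then obtain W where W: "\<forall>x\<in>sign_vectors N.
      (\<Sum>i=1..N. \<Sum>j=1..N. W i j * \<rho> i j) < (\<Sum>i=1..N. \<Sum>j=1..N. W i j * real_of_int (x i * x j))"
    by (rule unit_covariance_separation)
  define F where "F x = (\<Sum>i=1..N. \<Sum>j=1..N. W i j * real_of_int (x i * x j))" for x :: "nat \<Rightarrow> int"
  define c where "c = (\<Sum>i=1..N. \<Sum>j=1..N. W i j * \<rho> i j)"
  obtain u where u: "u \<in> sign_vectors N" "\<forall>x\<in>sign_vectors N. F u \<le> F x"
    using arg_min_if_finite[OF finite_sign_vectors, where f = F] one_in_sign_vectors
    by (metis empty_iff not_le)
  have u_sign: "\<forall>i\<in>{1..N}. u i \<in> {-1, 1}" and u_sq: "\<forall>i\<in>{1..N}. u i * u i = 1"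
    using u(1) unfolding sign_vectors_def by auto
  define g where "g i j = 1/4 - 1/4 * (real_of_int (u i * u j) * \<rho> i j)" for i j
  have g: "symmetric_mat N g" "\<forall>i\<in>{1..N}. g i i = 0"
    using assms(2,3) u_sq unfolding g_def symmetric_mat_def by (auto simp: mult.commute)
  obtain t X where t: "t \<ge> 0" and X: "unit_field N X"
    and gX: "\<forall>i\<in>{1..N}. \<forall>j\<in>{1..N}. g i j = t * (1 - unit_cov_of X i j)"
    using matheron[OF g] qform_sign_flip_nonpos[OF u_sign assms(4)]
    unfolding g_def supra_in_cone_iff_unit_cov[OF g[unfolded g_def]] by blast
  define W' where "W' i j = real_of_int (u i * u j) * W i j" for i j
  have "W' i j * g i j = (W i j * real_of_int (u i * u j) - W i j * \<rho> i j) / 4"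
    if "i \<in> {1..N}" "j \<in> {1..N}" for i j
  proof -
    have "real_of_int (u i * u j) * real_of_int (u i * u j) = 1"
      using u_sq that by (metis mult.commute mult.left_commute mult_1 of_int_1 of_int_mult)
    thus ?thesis unfolding W'_def g_def by (simp add: algebra_simps)
  qed
  hence "(\<Sum>i=1..N. \<Sum>j=1..N. W' i j * g i j)
      = (\<Sum>i=1..N. \<Sum>j=1..N. (W i j * real_of_int (u i * u j) - W i j * \<rho> i j) / 4)"
    by (intro sum.cong refl) auto
  also have "\<dots> = (F u - c) / 4"
    unfolding F_def c_def by (simp add: sum_subtractf sum_divide_distrib[symmetric])
  moreover have "c < F u" using W u(1) unfolding F_def c_def by blast
  ultimately have pos: "0 < (\<Sum>i=1..N. \<Sum>j=1..N. W' i j * g i j)" by simp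
  have "(\<Sum>i=1..N. \<Sum>j=1..N. W' i j * g i j)
      = t * (\<Sum>i=1..N. \<Sum>j=1..N. real_of_int (u i * u j) * W i j * (1 - unit_cov_of X i j))"
    using gX unfolding W'_def sum_distrib_left by (intro sum.cong refl) simp
  also have "\<dots> \<le> 0"
    using t sign_weighted_sum_one_minus_unit_cov_nonpos[OF u[unfolded F_def] X]
    by (simp add: mult_nonneg_nonpos)
  finally have "(\<Sum>i=1..N. \<Sum>j=1..N. W' i j * g i j) \<le> 0" .
  with pos show False by simp
qed

lemma matheron_if_unit_covariance_criterion:
  assumes "N \<ge> 1"
    and criterion: "\<And>\<rho>. symmetric_mat N \<rho> \<Longrightarrow> (\<forall>i\<in>{1..N}. \<rho> i i = 1) \<Longrightarrow>
      (\<forall>e\<in>E_set N. 1 \<le> qform N \<rho> e) \<Longrightarrow> unit_covariance N \<rho>"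
    and g: "symmetric_mat N g" "\<forall>i\<in>{1..N}. g i i = 0"
    and nonpos: "\<forall>e::nat \<Rightarrow> int. (\<Sum>i=1..N. e i) = 1 \<longrightarrow> qform N g e \<le> 0"
  shows "supra N g \<in> cone_at (\<lambda>_. 0) (covariograms_supra N)"
proof -
  define C where "C = (\<Sum>i=1..N. \<Sum>j=1..N. \<bar>g i j\<bar>) * (real N + 1)\<^sup>2"
  have "C \<ge> 0" unfolding C_def by (intro mult_nonneg_nonneg sum_nonneg) auto
  define s where "s = 1 / (C + 1)"
  have s: "s > 0" "s * C \<le> 1" unfolding s_def using \<open>C \<ge> 0\<close> by (auto simp: field_simps)
  have "symmetric_mat N (\<lambda>i j. 1 - s * g i j)" using g(1) unfolding symmetric_mat_def by simp
  moreover have "\<forall>i\<in>{1..N}. 1 - s * g i i = 1" using g(2) by simp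
  moreover have "\<forall>e\<in>E_set N. 1 \<le> qform N (\<lambda>i j. 1 - s * g i j) e"
    using one_le_qform_shift_if_unit_sums_nonpos[OF assms(1) nonpos] odd_sum_if_in_E_set s
    unfolding C_def by simp
  ultimately have "unit_covariance N (\<lambda>i j. 1 - s * g i j)" by (rule criterion)
  then obtain X where X: "unit_field N X"
    and "\<forall>i\<in>{1..N}. \<forall>j\<in>{1..N}. 1 - s * g i j = unit_cov_of X i j"
    unfolding unit_covariance_def by blast
  hence "\<forall>i\<in>{1..N}. \<forall>j\<in>{1..N}. g i j = 1 / s * (1 - unit_cov_of X i j)"
    using s(1) by (auto simp: field_simps)
  thus ?thesis
    unfolding supra_in_cone_iff_unit_cov[OF g] using X s(1) by (intro exI[of _ "1 / s"]) auto
qed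

theorem theorem2:
  fixes N :: nat
  assumes "N \<ge> 1"
  shows "(\<forall>\<gamma>. symmetric_mat N \<gamma> \<and> (\<forall>i\<in>{1..N}. \<gamma> i i = 0) \<longrightarrow>
            (supra N \<gamma> \<in> cone_at (\<lambda>_. 0) (covariograms_supra N) \<longleftrightarrow>
             (\<forall>e::nat \<Rightarrow> int. (\<Sum>i=1..N. e i) = 1 \<longrightarrow> qform N \<gamma> e \<le> 0)))
       \<longleftrightarrow>
         (\<forall>\<rho>. symmetric_mat N \<rho> \<and> (\<forall>i\<in>{1..N}. \<rho> i i = 1) \<longrightarrow>
            (unit_covariance N \<rho> \<longleftrightarrow> (\<forall>e\<in>E_set N. qform N \<rho> e \<ge> 1)))"
proof -
  have matheron_easy: "qform N \<gamma> e \<le> 0"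
    if "symmetric_mat N \<gamma> \<and> (\<forall>i\<in>{1..N}. \<gamma> i i = 0)"
      "supra N \<gamma> \<in> cone_at (\<lambda>_. 0) (covariograms_supra N)" "(\<Sum>i=1..N. e i) = 1" for \<gamma> e
    using qform_nonpos_if_supra_in_cone that by blast
  have criterion_easy: "1 \<le> qform N \<rho> e" if "unit_covariance N \<rho>" "e \<in> E_set N" for \<rho> e
    using one_le_qform_if_unit_covariance odd_sum_if_in_E_set that by blast
  show ?thesis
    using unit_covariance_if_matheron matheron_if_unit_covariance_criterion[OF assms]
      matheron_easy criterion_easy
    by blast
qed

end
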